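(* Let $q$ be a power of an odd prime with $q\equiv 3\pmod 4$, and let $k\equiv 0\pmod 4$ be a positive integer. Let $C_k=\{x\in\mathbb{F}_q^k : -x_1^2+x_2^2+\cdots+x_k^2=0\}$ and let $G_{Q,k}$ be the Cayley graph with vertex set $\mathbb{F}_q^k$ in which $x$ and $y$ are adjacent iff $x-y\in C_k$. Then its eigenvalues $\{\lambda_m\}_{m\in\mathbb{F}_q^k}$ are \[ \lambda_m=q^k\cdot\begin{cases} q^{-1}\delta_0(m)-q^{-\frac{k}{2}}+q^{-\frac{k+2}{2}} & \text{if } m\in C_k,\\ q^{-\frac{k+2}{2}} & \text{if } m\notin C_k.\end{cases}\]
   Context: Let $\chi$ be the principal (canonical) additive character of $\mathbb{F}_q$. The eigenvalue $\lambda_m$ of the Cayley graph is the one associated with the eigenvector $x\mapsto\chi(m\cdot x)$, namely $\lambda_m=\sum_{c\in C_k}\chi(-m\cdot c)$. $\delta_0(m)=1$ if $m=(0,\dots,0)$ and $\delta_0(m)=0$ otherwise. *)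

theory Defs
  imports "HOL-Analysis.Analysis"
begin

text \<open>Finite field F_q is modelled by a type 'a :: {finite, field}; q = CARD('a), p = CHAR('a).
 Vectors of F_q^k are functions nat => 'a vanishing outside {0..<k}; coordinate 0 plays the role of x_1.\<close>

definition fq_degree :: "'a::{finite,field} itself \<Rightarrow> nat" where
  "fq_degree _ = (THE r. CHAR('a) ^ r = CARD('a))"

text \<open>Absolute trace F_q -> F_p (values in the prime subfield of 'a).\<close>
definition fq_trace :: "'a::{finite,field} \<Rightarrow> 'a" where
  "fq_trace x = (\<Sum>i<fq_degree TYPE('a). x ^ (CHAR('a) ^ i))"

definition can_char :: "'a::{finite,field} \<Rightarrow> complex" where
  "can_char x = cis (2 * pi * real (THE j. j < CHAR('a) \<and> of_nat j = fq_trace x) / real CHAR('a))"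

definition vecs :: "nat \<Rightarrow> (nat \<Rightarrow> 'a::zero) set" where
  "vecs k = {x. \<forall>i\<ge>k. x i = 0}"

definition dotp :: "nat \<Rightarrow> (nat \<Rightarrow> 'a::comm_ring) \<Rightarrow> (nat \<Rightarrow> 'a) \<Rightarrow> 'a" where
  "dotp k m x = (\<Sum>i<k. m i * x i)"

definition quadQ :: "nat \<Rightarrow> (nat \<Rightarrow> 'a::comm_ring_1) \<Rightarrow> 'a" where
  "quadQ k x = - ((x 0)^2) + (\<Sum>i\<in>{1..<k}. (x i)^2)"

definition coneC :: "nat \<Rightarrow> (nat \<Rightarrow> 'a::comm_ring_1) set" where
  "coneC k = {x \<in> vecs k. quadQ k x = 0}"

definition cayley_adj :: "nat \<Rightarrow> (nat \<Rightarrow> 'a::comm_ring_1) \<Rightarrow> (nat \<Rightarrow> 'a) \<Rightarrow> bool" where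
  "cayley_adj k x y \<longleftrightarrow> x - y \<in> coneC k"

definition cayley_eig :: "nat \<Rightarrow> (nat \<Rightarrow> 'a::{finite,field}) \<Rightarrow> complex" where
  "cayley_eig k m = (\<Sum>c\<in>coneC k. can_char (- dotp k m c))"

end

(* Orthogonality of additive characters gives
     q lambda_m = Sum_{t in F_q} Sum_{x in F_q^k} chi(t Q(x) - m.x).
   The term t = 0 is q^k delta_0(m).  For t <> 0 the sum over x factors over the coordinates into
   completed squares, each a quadratic Gauss sum G(t) or G(-t) times a character value, and the
   product is -G(t)^k chi(-Q(m)/(4t)) once G(-t) = -G(t).  That identity holds because -1 is a
   non-square for q = 3 (mod 4): then the nonzero squares and their negatives partition F_q^*.
   With G(t) G(-t) = q this gives G(t)^2 = -q, so G(t)^k = q^(k/2) for 4 | k, and the remaining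
   sum over t <> 0 of chi(-Q(m)/(4t)) is q [Q(m) = 0] - 1. *)

theory Submission
  imports Defs
    "HOL-Computational_Algebra.Polynomial"
    "HOL-Computational_Algebra.Primes"
    "HOL-Number_Theory.Cong"
    "HOL-Algebra.FiniteProduct"
begin

section \<open>Finite fields\<close>

lemma prime_CHAR_finite_field: "prime CHAR('a::{finite,field})"
  by (intro prime_CHAR_semidom finite_imp_CHAR_pos) simp

lemma CHAR_ge_2: "CHAR('a::{finite,field}) \<ge> 2"
  using prime_CHAR_finite_field prime_ge_2_nat by blast

lemma two_neq_zero_if_odd_CHAR: "odd CHAR('a) \<Longrightarrow> (2::'a::{finite,field}) \<noteq> 0"
  using of_nat_eq_0_iff_char_dvd[where 'a = 'a, of 2] CHAR_ge_2[where 'a = 'a]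
  by (auto dest: dvd_imp_le)

lemma four_neq_zero_if_odd_CHAR: "odd CHAR('a) \<Longrightarrow> (4::'a::{finite,field}) \<noteq> 0"
  using two_neq_zero_if_odd_CHAR mult_eq_0_iff[of "2::'a" 2] by simp

text \<open>The library lemma \<open>finite_field_power_card_eq_same\<close> needs sort \<open>finite_field\<close>, which a
  type of sort \<open>{finite,field}\<close> does not have; Lagrange's theorem for the multiplicative group
  gives it directly.\<close>
lemma power_card_eq_self: "(x::'a::{finite,field}) ^ CARD('a) = x"
proof (cases "x = 0")
  case False
  define G :: "'a monoid" where "G = \<lparr>carrier = UNIV - {0}, mult = (*), one = 1\<rparr>"
  interpret G: comm_group G
  proof (rule comm_groupI)
    show "\<exists>y\<in>carrier G. y \<otimes>\<^bsub>G\<^esub> z = \<one>\<^bsub>G\<^esub>" if "z \<in> carrier G" for z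
      using that by (intro bexI[of _ "inverse z"]) (auto simp: G_def)
  qed (auto simp: G_def ac_simps)
  have pow: "y [^]\<^bsub>G\<^esub> n = y ^ n" for y and n :: nat
    by (induction n) (simp_all add: G_def)
  have "x [^]\<^bsub>G\<^esub> card (carrier G) = \<one>\<^bsub>G\<^esub>"
    by (rule G.power_order_eq_one) (simp_all add: G_def False)
  then have "x ^ (CARD('a) - 1) = 1"
    unfolding pow by (simp add: G_def card_Diff_singleton)
  then show ?thesis
    by (metis power_minus_mult zero_less_card_finite mult_1)
qed simp

lemma of_nat_power_CHAR:
  assumes "prime CHAR('a::comm_semiring_1)"
  shows "(of_nat n :: 'a) ^ CHAR('a) = of_nat n"
proof (induction n)
  case 0
  show ?case using prime_gt_0_nat[OF assms] by (simp add: power_0_left)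
next
  case (Suc n)
  then show ?case by (simp add: freshmans_dream[OF assms refl])
qed

definition prime_subfield :: "'a::{finite,field} set" where
  "prime_subfield = {y. y ^ CHAR('a) = y}"

lemma card_of_nat_lessThan_CHAR:
  "card (of_nat ` {..<CHAR('a::semiring_1_cancel)} :: 'a set) = CHAR('a)"
proof -
  have "inj_on (of_nat :: nat \<Rightarrow> 'a) {..<CHAR('a)}"
    by (auto intro!: inj_onI simp: of_nat_eq_iff_cong_CHAR cong_less_modulus_unique_nat)
  then show ?thesis
    by (simp add: card_image)
qed

text \<open>The polynomial \<open>X^p - X\<close> has at most \<open>p\<close> roots, and the \<open>p\<close> distinct elements
  \<open>0, 1, \<dots>, p - 1\<close> are among them.\<close>
lemma prime_subfield_eq:
  "(prime_subfield :: 'a::{finite,field} set) = of_nat ` {..<CHAR('a)}"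
proof -
  let ?p = "CHAR('a)"
  define R :: "'a poly" where "R = monom 1 ?p - monom 1 1"
  have p2: "?p \<ge> 2" by (rule CHAR_ge_2)
  have "coeff R ?p = 1" using p2 by (simp add: R_def coeff_monom)
  then have "R \<noteq> 0" by auto
  have "degree R \<le> ?p"
    unfolding R_def by (rule degree_diff_le) (use p2 in \<open>simp_all add: degree_monom_eq\<close>)
  moreover have "{z. poly R z = 0} = prime_subfield"
    by (simp add: R_def poly_monom prime_subfield_def)
  ultimately have "card (prime_subfield :: 'a set) \<le> card (of_nat ` {..<?p} :: 'a set)"
    using card_poly_roots_bound[OF \<open>R \<noteq> 0\<close>] by (simp add: card_of_nat_lessThan_CHAR)
  moreover have "of_nat ` {..<?p} \<subseteq> (prime_subfield :: 'a set)"
    using of_nat_power_CHAR[OF prime_CHAR_finite_field] by (auto simp: prime_subfield_def)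
  ultimately show ?thesis
    by (intro card_seteq[symmetric]) simp_all
qed

lemma card_prime_subfield: "card (prime_subfield :: 'a::{finite,field} set) = CHAR('a)"
  by (simp only: prime_subfield_eq card_of_nat_lessThan_CHAR)

lemma prime_subfield_closed:
  fixes x y :: "'a::{finite,field}"
  assumes "x \<in> prime_subfield" "y \<in> prime_subfield"
  shows "x + y \<in> prime_subfield" "x - y \<in> prime_subfield" "x * y \<in> prime_subfield"
    and "inverse x \<in> prime_subfield"
proof -
  note dream = freshmans_dream[OF prime_CHAR_finite_field refl]
  show "x + y \<in> prime_subfield" "x * y \<in> prime_subfield" "inverse x \<in> prime_subfield"
    using assms by (simp_all add: prime_subfield_def dream power_mult_distrib power_inverse)
  have "x = (x - y) + y" by simp
  then have "x ^ CHAR('a) = (x - y) ^ CHAR('a) + y ^ CHAR('a)"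
    by (metis dream)
  then show "x - y \<in> prime_subfield"
    using assms by (simp add: prime_subfield_def algebra_simps)
qed

lemma of_nat_in_prime_subfield: "of_nat n \<in> (prime_subfield :: 'a::{finite,field} set)"
  by (simp add: prime_subfield_def of_nat_power_CHAR prime_CHAR_finite_field)

definition prime_subspace :: "'a::{finite,field} set \<Rightarrow> bool" where
  "prime_subspace S \<longleftrightarrow>
     0 \<in> S \<and> (\<forall>x\<in>S. \<forall>y\<in>S. x + y \<in> S) \<and> (\<forall>c\<in>prime_subfield. \<forall>x\<in>S. c * x \<in> S)"

lemma prime_subspace_extend:
  fixes S :: "'a::{finite,field} set"
  assumes S: "prime_subspace S" and a: "a \<notin> S"
  defines "f \<equiv> \<lambda>(s, c). s + c * a"
  shows "prime_subspace (f ` (S \<times> prime_subfield))"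
    and "card (f ` (S \<times> prime_subfield)) = card S * CHAR('a)"
proof -
  have P: "0 \<in> (prime_subfield :: 'a set)" "1 \<in> (prime_subfield :: 'a set)"
    using of_nat_in_prime_subfield[of 0] of_nat_in_prime_subfield[of 1] by simp_all
  have f_add: "f (s1, c1) + f (s2, c2) = f (s1 + s2, c1 + c2)"
    and f_scale: "d * f (s1, c1) = f (d * s1, d * c1)" for s1 s2 c1 c2 d
    by (simp_all add: f_def algebra_simps)
  show "prime_subspace (f ` (S \<times> prime_subfield))"
    unfolding prime_subspace_def
  proof (intro conjI ballI)
    have "0 = f (0, 0)" by (simp add: f_def)
    then show "0 \<in> f ` (S \<times> prime_subfield)"
      using S P by (auto simp: prime_subspace_def)
  next
    fix x y assume "x \<in> f ` (S \<times> prime_subfield)" "y \<in> f ` (S \<times> prime_subfield)"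
    then show "x + y \<in> f ` (S \<times> prime_subfield)"
      using S by (auto simp: f_add prime_subspace_def intro!: imageI prime_subfield_closed)
  next
    fix d :: 'a and x assume "d \<in> prime_subfield" "x \<in> f ` (S \<times> prime_subfield)"
    then show "d * x \<in> f ` (S \<times> prime_subfield)"
      using S by (auto simp: f_scale prime_subspace_def intro!: imageI prime_subfield_closed)
  qed
  have "inj_on f (S \<times> prime_subfield)"
  proof (rule inj_onI, clarify)
    fix s c s' c' assume in_S: "s \<in> S" "s' \<in> S" and in_P: "c \<in> prime_subfield" "c' \<in> prime_subfield"
      and eq: "f (s, c) = f (s', c')"
    show "s = s' \<and> c = c'"
    proof (cases "c = c'")
      case False
      text \<open>Then \<open>a = (s' - s) / (c - c')\<close> would lie in \<open>S\<close>.\<close>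
      have "- 1 \<in> (prime_subfield :: 'a set)"
        using prime_subfield_closed(2)[OF P] by simp
      then have "- s \<in> S"
        using S in_S by (metis prime_subspace_def mult_minus1)
      moreover have "inverse (c - c') \<in> prime_subfield"
        using in_P by (simp add: prime_subfield_closed)
      ultimately have "inverse (c - c') * (s' + - s) \<in> S"
        using S in_S unfolding prime_subspace_def by blast
      also have "inverse (c - c') * (s' + - s) = a"
        using eq False by (simp add: f_def field_simps)
      finally show ?thesis using a by simp
    qed (use eq in \<open>simp add: f_def\<close>)
  qed
  then show "card (f ` (S \<times> prime_subfield)) = card S * CHAR('a)"
    by (simp add: card_image card_cartesian_product card_prime_subfield)
qed

lemma card_eq_card_prime_subspace_times_CHAR_power:
  fixes S :: "'a::{finite,field} set"
  assumes "prime_subspace S"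
  shows "\<exists>r. CARD('a) = card S * CHAR('a) ^ r"
  using assms
proof (induction "CARD('a) - card S" arbitrary: S rule: less_induct)
  case less
  show ?case
  proof (cases "S = UNIV")
    case False
    then obtain a where a: "a \<notin> S" by blast
    define S' where "S' = (\<lambda>(s, c). s + c * a) ` (S \<times> prime_subfield)"
    have S': "prime_subspace S'" "card S' = card S * CHAR('a)"
      using prime_subspace_extend[OF less.prems a] unfolding S'_def by auto
    have "card S > 0"
      using less.prems by (auto simp: prime_subspace_def card_gt_0_iff)
    have "card S' \<le> CARD('a)"
      by (simp add: card_mono)
    moreover have "card S < card S'"
      using S' CHAR_ge_2[where 'a = 'a] \<open>card S > 0\<close> by simp
    ultimately obtain r where "CARD('a) = card S' * CHAR('a) ^ r"
      using less.hyps[OF _ S'(1)] by fastforce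
    then show ?thesis
      using S' by (intro exI[of _ "Suc r"]) (simp add: ac_simps)
  qed (auto intro: exI[of _ 0])
qed

lemma card_finite_field_eq_CHAR_power: "\<exists>r. CARD('a::{finite,field}) = CHAR('a) ^ r"
proof -
  have "prime_subspace {0::'a}"
    by (simp add: prime_subspace_def)
  then show ?thesis
    using card_eq_card_prime_subspace_times_CHAR_power by fastforce
qed

lemma CHAR_power_fq_degree: "CHAR('a) ^ fq_degree TYPE('a) = CARD('a::{finite,field})"
proof -
  obtain r where r: "CARD('a) = CHAR('a) ^ r"
    using card_finite_field_eq_CHAR_power by blast
  have "fq_degree TYPE('a) = r"
    unfolding fq_degree_def
    using r CHAR_ge_2[where 'a = 'a] by (intro the_equality) (simp_all add: power_inject_exp)
  with r show ?thesis
    by simp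
qed

lemma fq_degree_pos: "fq_degree TYPE('a::{finite,field}) > 0"
proof -
  have "card {0, 1::'a} \<le> CARD('a)"
    by (rule card_mono) simp_all
  then show ?thesis
    using CHAR_power_fq_degree[where 'a = 'a] by (cases "fq_degree TYPE('a)") simp_all
qed

lemma fq_trace_add: "fq_trace (x + y) = fq_trace x + fq_trace (y::'a::{finite,field})"
  unfolding fq_trace_def
  by (simp add: freshmans_dream'[OF prime_CHAR_finite_field refl] sum.distrib)

lemma fq_trace_zero: "fq_trace (0::'a::{finite,field}) = 0"
  unfolding fq_trace_def using CHAR_ge_2[where 'a = 'a] by (simp add: power_0_left)

text \<open>The Frobenius map permutes the conjugates \<open>x, x^p, \<dots>, x^(p^(r-1))\<close> cyclically,
  since \<open>x^(p^r) = x^q = x\<close>; hence it fixes their sum.\<close>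
lemma fq_trace_in_prime_subfield: "fq_trace (x::'a::{finite,field}) \<in> prime_subfield"
proof -
  let ?p = "CHAR('a)" and ?r = "fq_degree TYPE('a)"
  define f where "f i = x ^ (?p ^ i)" for i
  have "f ?r = f 0"
    by (simp add: f_def CHAR_power_fq_degree power_card_eq_self)
  then have "f 0 + (\<Sum>i<?r. f (Suc i)) = (\<Sum>i<?r. f i) + f 0"
    by (metis sum.lessThan_Suc sum.lessThan_Suc_shift)
  moreover have "fq_trace x ^ ?p = (\<Sum>i<?r. f (Suc i))"
    unfolding fq_trace_def f_def
    by (simp add: freshmans_dream_sum[OF prime_CHAR_finite_field refl] power_mult[symmetric] mult.commute)
  ultimately show ?thesis
    by (simp add: prime_subfield_def fq_trace_def f_def)
qed

text \<open>Otherwise every element would be a root of the polynomial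
  \<open>X + X^p + \<dots> + X^(p^(r-1))\<close>, whose degree is less than \<open>q = p^r\<close>.\<close>
lemma fq_trace_nonzero: "\<exists>x::'a::{finite,field}. fq_trace x \<noteq> 0"
proof (rule ccontr)
  assume trace_zero: "\<nexists>x::'a. fq_trace x \<noteq> 0"
  let ?p = "CHAR('a)" and ?r = "fq_degree TYPE('a)"
  define T :: "'a poly" where "T = (\<Sum>i<?r. monom 1 (?p ^ i))"
  have r: "?r > 0" by (rule fq_degree_pos)
  have p: "?p \<ge> 2" by (rule CHAR_ge_2)
  have "coeff T (?p ^ (?r - 1)) = (\<Sum>i<?r. if i = ?r - 1 then 1 else 0)"
    unfolding T_def coeff_sum coeff_monom using p by (intro sum.cong) auto
  also have "\<dots> = 1"
    using r by simp
  finally have "T \<noteq> 0"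
    by auto
  have "degree T \<le> ?p ^ (?r - 1)"
    unfolding T_def
    by (rule degree_sum_le) (use p in \<open>auto intro!: order.trans[OF degree_monom_le] power_increasing\<close>)
  moreover have "{z. poly T z = 0} = UNIV"
    using trace_zero by (auto simp: T_def poly_sum poly_monom fq_trace_def)
  ultimately have "CARD('a) \<le> ?p ^ (?r - 1)"
    using card_poly_roots_bound[OF \<open>T \<noteq> 0\<close>] by simp
  moreover have "?p ^ (?r - 1) < ?p ^ ?r"
    using p r by (intro power_strict_increasing) auto
  ultimately show False
    by (simp add: CHAR_power_fq_degree)
qed

section \<open>The canonical additive character\<close>

lemma can_char_eq_exp:
  fixes x :: "'a::{finite,field}"
  assumes "fq_trace x = of_nat j"
  shows "can_char x = exp (2 * of_real pi * \<i> * of_nat j / of_nat CHAR('a))"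
proof -
  let ?p = "CHAR('a)"
  obtain i where i: "i < ?p" "fq_trace x = of_nat i"
    using fq_trace_in_prime_subfield[of x] by (auto simp: prime_subfield_eq)
  have "(THE j. j < ?p \<and> of_nat j = fq_trace x) = i"
    using i by (intro the_equality) (auto simp: of_nat_eq_iff_cong_CHAR cong_less_modulus_unique_nat)
  then have "can_char x = exp (2 * of_real pi * \<i> * of_nat i / of_nat ?p)"
    by (simp add: can_char_def cis_conv_exp mult_ac)
  also have "\<dots> = exp (2 * of_real pi * \<i> * of_nat j / of_nat ?p)"
    using i assms CHAR_ge_2[where 'a = 'a]
    by (subst complex_root_unity_eq) (auto simp: of_nat_eq_iff_cong_CHAR cong_def)
  finally show ?thesis .
qed

lemma can_char_add: "can_char (x + y) = can_char x * can_char (y::'a::{finite,field})"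
proof -
  obtain i j where i: "fq_trace x = of_nat i" and j: "fq_trace y = of_nat j"
    using fq_trace_in_prime_subfield[of x] fq_trace_in_prime_subfield[of y]
    by (auto simp: prime_subfield_eq)
  then have ij: "fq_trace (x + y) = of_nat (i + j)"
    by (simp add: fq_trace_add)
  show ?thesis
    unfolding can_char_eq_exp[OF i] can_char_eq_exp[OF j] can_char_eq_exp[OF ij]
    by (simp only: exp_add[symmetric] of_nat_add add_divide_distrib distrib_left)
qed

lemma can_char_diff: "can_char (x - y) = can_char x * can_char (- y::'a::{finite,field})"
  using can_char_add[of x "- y"] by simp

lemma can_char_zero: "can_char (0::'a::{finite,field}) = 1"
  using can_char_eq_exp[of "0::'a" 0] by (simp add: fq_trace_zero)

lemma can_char_sum: "can_char (\<Sum>i\<in>A. f i) = (\<Prod>i\<in>A. can_char (f i))"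
  by (induction A rule: infinite_finite_induct) (simp_all add: can_char_zero can_char_add)

lemma can_char_nontrivial: "\<exists>x::'a::{finite,field}. can_char x \<noteq> 1"
proof -
  obtain x :: 'a where "fq_trace x \<noteq> 0"
    using fq_trace_nonzero by blast
  moreover obtain j where "j < CHAR('a)" "fq_trace x = of_nat j"
    using fq_trace_in_prime_subfield[of x] by (auto simp: prime_subfield_eq)
  ultimately have "\<not> CHAR('a) dvd j"
    by (auto elim: dvdE)
  then have "can_char x \<noteq> 1"
    using CHAR_ge_2[where 'a = 'a] \<open>fq_trace x = of_nat j\<close>
    by (simp add: can_char_eq_exp complex_root_unity_eq_1)
  then show ?thesis ..
qed

lemma sum_can_char_mult:
  "(\<Sum>x\<in>UNIV. can_char (b * x)) = (if b = 0 then of_nat CARD('a) else 0)"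
  for b :: "'a::{finite,field}"
proof (cases "b = 0")
  case False
  obtain a :: 'a where a: "can_char a \<noteq> 1"
    using can_char_nontrivial by blast
  have scale: "(\<Sum>x\<in>UNIV. can_char (b * x)) = (\<Sum>x\<in>UNIV. can_char (x::'a))"
    by (rule sum.reindex_bij_witness[of _ "\<lambda>y. y / b" "\<lambda>x. b * x"]) (use False in auto)
  have "can_char a * (\<Sum>x\<in>UNIV. can_char (x::'a)) = (\<Sum>x\<in>UNIV. can_char (a + x))"
    by (simp add: sum_distrib_left can_char_add)
  also have "\<dots> = (\<Sum>x\<in>UNIV. can_char (x::'a))"
    by (rule sum.reindex_bij_witness[of _ "\<lambda>y. y - a" "\<lambda>x. a + x"]) auto
  finally show ?thesis
    using a False scale by (simp add: mult_cancel_right2)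
qed (simp add: can_char_zero)

section \<open>Quadratic Gauss sums\<close>

definition gauss_sum :: "'a::{finite,field} \<Rightarrow> complex" where
  "gauss_sum a = (\<Sum>x\<in>UNIV. can_char (a * x ^ 2))"

text \<open>Substituting \<open>x = y + z\<close> turns the double sum into
  \<open>\<Sum>z. \<chi>(a z\<^sup>2) \<Sum>y. \<chi>(2 a z y)\<close>, and only \<open>z = 0\<close> survives the inner sum.\<close>
lemma gauss_sum_mult_uminus:
  fixes a :: "'a::{finite,field}"
  assumes "odd CHAR('a)" "a \<noteq> 0"
  shows "gauss_sum a * gauss_sum (- a) = of_nat CARD('a)"
proof -
  have two: "(2::'a) \<noteq> 0"
    using assms(1) by (rule two_neq_zero_if_odd_CHAR)
  have shift: "(\<Sum>x\<in>UNIV. can_char (a * x ^ 2 - a * y ^ 2))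
      = (\<Sum>z\<in>UNIV. can_char (a * (y + z) ^ 2 - a * y ^ 2))" for y
    by (rule sum.reindex_bij_witness[of _ "\<lambda>z. y + z" "\<lambda>x. x - y"]) auto
  have "gauss_sum a * gauss_sum (- a) = (\<Sum>y\<in>UNIV. \<Sum>x\<in>UNIV. can_char (a * x ^ 2 - a * y ^ 2))"
    unfolding gauss_sum_def sum_product
    by (subst sum.swap) (simp add: can_char_add[symmetric])
  also have "\<dots> = (\<Sum>y\<in>UNIV. \<Sum>z\<in>UNIV. can_char (a * (y + z) ^ 2 - a * y ^ 2))"
    by (simp only: shift)
  also have "\<dots> = (\<Sum>z\<in>UNIV. can_char (a * z ^ 2) * (\<Sum>y\<in>UNIV. can_char ((2 * a * z) * y)))"
    by (subst sum.swap)
      (simp add: sum_distrib_left can_char_add[symmetric] power2_eq_square algebra_simps)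
  also have "\<dots> = (\<Sum>z\<in>UNIV. if z = (0::'a) then of_nat CARD('a) else 0)"
    by (intro sum.cong refl) (use assms(2) two in \<open>simp add: sum_can_char_mult can_char_zero\<close>)
  also have "\<dots> = of_nat CARD('a)"
    by simp
  finally show ?thesis .
qed

definition nonzero_squares :: "'a::{finite,field} set" where
  "nonzero_squares = (\<lambda>c. c ^ 2) ` (UNIV - {0})"

lemma sum_over_squares:
  fixes f :: "'a::{finite,field} \<Rightarrow> 'b::comm_semiring_1"
  assumes "odd CHAR('a)"
  shows "(\<Sum>x\<in>UNIV. f (x ^ 2)) = f 0 + 2 * (\<Sum>y\<in>nonzero_squares. f y)"
proof -
  have fibre: "card {x. x \<noteq> 0 \<and> x ^ 2 = c ^ 2} = 2" if "c \<noteq> 0" for c :: 'a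
  proof -
    have "{x. x \<noteq> 0 \<and> x ^ 2 = c ^ 2} = {c, - c}"
      using that by (auto simp: power2_eq_iff)
    moreover have "c \<noteq> - c"
      using that two_neq_zero_if_odd_CHAR[OF assms] by (auto simp: minus_equation_iff[of c] mult_2[symmetric])
    ultimately show ?thesis
      by simp
  qed
  have "(\<Sum>x\<in>UNIV. f (x ^ 2)) = f 0 + (\<Sum>x\<in>UNIV - {0}. f (x ^ 2))"
    by (simp add: sum.remove[of UNIV 0])
  also have "(\<Sum>x\<in>UNIV - {0}. f (x ^ 2))
      = (\<Sum>y\<in>nonzero_squares. \<Sum>x | x \<noteq> 0 \<and> x ^ 2 = y. f y)"
    unfolding nonzero_squares_def by (subst sum.image_gen[where g = "\<lambda>x. x ^ 2"]) auto
  also have "\<dots> = (\<Sum>y\<in>nonzero_squares. 2 * f y)"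
  proof (intro sum.cong refl)
    fix y :: 'a assume "y \<in> nonzero_squares"
    then obtain c where "c \<noteq> 0" "y = c ^ 2"
      unfolding nonzero_squares_def by auto
    then show "(\<Sum>x | x \<noteq> 0 \<and> x ^ 2 = y. f y) = 2 * f y"
      by (simp add: fibre)
  qed
  finally show ?thesis
    by (simp add: sum_distrib_left)
qed

lemma card_nonzero_squares:
  "odd CHAR('a) \<Longrightarrow> CARD('a) = 1 + 2 * card (nonzero_squares :: 'a::{finite,field} set)"
  using sum_over_squares[where 'a = 'a, of "\<lambda>_. 1 :: nat"] by simp

lemma nonzero_squares_partition:
  assumes "odd CHAR('a)" and minus_one: "\<forall>c::'a::{finite,field}. c ^ 2 \<noteq> - 1"
  shows "nonzero_squares \<inter> uminus ` nonzero_squares = ({} :: 'a set)"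
    and "nonzero_squares \<union> uminus ` nonzero_squares = UNIV - {0 :: 'a}"
proof -
  show disjoint: "nonzero_squares \<inter> uminus ` nonzero_squares = ({} :: 'a set)"
  proof (rule ccontr)
    assume "nonzero_squares \<inter> uminus ` nonzero_squares \<noteq> ({} :: 'a set)"
    then obtain c d :: 'a where "d \<noteq> 0" "c ^ 2 = - (d ^ 2)"
      unfolding nonzero_squares_def by auto
    then have "(c / d) ^ 2 = - 1"
      by (simp add: power_divide)
    with minus_one show False by blast
  qed
  have "card (nonzero_squares \<union> uminus ` nonzero_squares :: 'a set) = card (UNIV - {0 :: 'a})"
    using card_nonzero_squares[OF assms(1)] disjoint
    by (simp add: card_Un_disjoint card_image card_Diff_singleton)
  then show "nonzero_squares \<union> uminus ` nonzero_squares = UNIV - {0 :: 'a}"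
    by (intro card_subset_eq) (auto simp: nonzero_squares_def)
qed

lemma gauss_sum_uminus:
  fixes a :: "'a::{finite,field}"
  assumes "odd CHAR('a)" and minus_one: "\<forall>c::'a. c ^ 2 \<noteq> - 1" and "a \<noteq> 0"
  shows "gauss_sum (- a) = - gauss_sum a"
proof -
  note partition = nonzero_squares_partition[OF assms(1) minus_one]
  have "gauss_sum b = 1 + 2 * (\<Sum>y\<in>nonzero_squares. can_char (b * y))" for b :: 'a
    unfolding gauss_sum_def by (subst sum_over_squares[OF assms(1)]) (simp add: can_char_zero)
  then have "gauss_sum a + gauss_sum (- a)
      = 2 + 2 * ((\<Sum>y\<in>nonzero_squares. can_char (a * y))
                 + (\<Sum>y\<in>uminus ` nonzero_squares. can_char (a * y)))"
    by (simp add: sum.reindex)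
  also have "\<dots> = 2 + 2 * (\<Sum>y\<in>UNIV - {0}. can_char (a * y))"
    by (simp add: partition(2)[symmetric] sum.union_disjoint partition(1))
  also have "\<dots> = 0"
    using \<open>a \<noteq> 0\<close> by (simp add: sum_diff1 sum_can_char_mult can_char_zero)
  finally show ?thesis
    by (simp add: eq_neg_iff_add_eq_0 add.commute)
qed

lemma gauss_sum_square:
  fixes a :: "'a::{finite,field}"
  assumes "odd CHAR('a)" "\<forall>c::'a. c ^ 2 \<noteq> - 1" "a \<noteq> 0"
  shows "gauss_sum a ^ 2 = - of_nat CARD('a)"
  using gauss_sum_mult_uminus[OF assms(1,3)] gauss_sum_uminus[OF assms]
  by (auto simp: power2_eq_square minus_equation_iff)

lemma minus_one_not_square:
  fixes c :: "'a::{finite,field}"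
  assumes "odd CHAR('a)" "CARD('a) mod 4 = 3"
  shows "c ^ 2 \<noteq> - 1"
proof
  assume c: "c ^ 2 = - 1"
  define j where "j = CARD('a) div 4"
  have "CARD('a) = 2 * (2 * j + 1) + 1"
    using assms(2) unfolding j_def by presburger
  then have "c = (c ^ 2) ^ (2 * j + 1) * c"
    using power_card_eq_self[of c] by (metis power_add power_mult power_one_right)
  also have "\<dots> = - c"
    using c by simp
  finally have "2 * c = 0"
    by simp
  then show False
    using c two_neq_zero_if_odd_CHAR[OF assms(1)] by simp
qed

section \<open>Character sums over \<open>F_q^k\<close>\<close>

lemma vecs_eq_image_PiE:
  "(vecs k :: (nat \<Rightarrow> 'a::zero) set) = (\<lambda>g i. if i < k then g i else 0) ` PiE {..<k} (\<lambda>_. UNIV)"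
proof (intro Set.set_eqI iffI)
  fix x :: "nat \<Rightarrow> 'a" assume "x \<in> vecs k"
  then have "x = (\<lambda>i. if i < k then restrict x {..<k} i else 0)"
    by (auto simp: vecs_def fun_eq_iff)
  then show "x \<in> (\<lambda>g i. if i < k then g i else 0) ` PiE {..<k} (\<lambda>_. UNIV)"
    by (intro image_eqI[of _ _ "restrict x {..<k}"]) auto
qed (clarsimp simp: vecs_def)

lemma finite_vecs: "finite (vecs k :: (nat \<Rightarrow> 'a::{finite,zero}) set)"
  by (simp add: vecs_eq_image_PiE finite_PiE)

lemma sum_vecs_prod:
  fixes f :: "nat \<Rightarrow> 'a::{finite,zero} \<Rightarrow> 'b::comm_semiring_1"
  shows "(\<Sum>x\<in>vecs k. \<Prod>i<k. f i (x i)) = (\<Prod>i<k. \<Sum>a\<in>UNIV. f i a)"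
proof -
  define ext :: "(nat \<Rightarrow> 'a) \<Rightarrow> nat \<Rightarrow> 'a"
    where "ext g i = (if i < k then g i else 0)" for g i
  have "inj_on ext (PiE {..<k} (\<lambda>_. UNIV))"
    by (rule inj_onI, rule PiE_ext, assumption+) (metis ext_def lessThan_iff)
  then have "(\<Sum>x\<in>vecs k. \<Prod>i<k. f i (x i))
      = (\<Sum>g\<in>PiE {..<k} (\<lambda>_. UNIV). \<Prod>i<k. f i (ext g i))"
    unfolding vecs_eq_image_PiE ext_def[symmetric] by (simp add: sum.reindex)
  also have "\<dots> = (\<Sum>g\<in>PiE {..<k} (\<lambda>_. UNIV). \<Prod>i<k. f i (g i))"
    by (simp add: ext_def)
  finally show ?thesis
    by (simp add: prod_sum_PiE)
qed

lemma sum_vecs_can_char_separable: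
  fixes f :: "nat \<Rightarrow> 'a::{finite,field} \<Rightarrow> 'b::{finite,field}"
  shows "(\<Sum>x\<in>vecs k. can_char (\<Sum>i<k. f i (x i))) = (\<Prod>i<k. \<Sum>a\<in>UNIV. can_char (f i a))"
  unfolding can_char_sum by (rule sum_vecs_prod)

lemma sum_vecs_can_char_dotp:
  fixes m :: "nat \<Rightarrow> 'a::{finite,field}"
  assumes "m \<in> vecs k"
  shows "(\<Sum>x\<in>vecs k. can_char (- dotp k m x)) = (if m = (\<lambda>_. 0) then of_nat CARD('a) ^ k else 0)"
proof -
  have "(\<Sum>x\<in>vecs k. can_char (- dotp k m x)) = (\<Prod>i<k. \<Sum>a\<in>UNIV. can_char (- m i * a))"
    unfolding dotp_def sum_negf[symmetric] minus_mult_left by (rule sum_vecs_can_char_separable)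
  also have "\<dots> = (\<Prod>i<k. if m i = 0 then of_nat CARD('a) else 0)"
    by (simp only: sum_can_char_mult neg_equal_0_iff_equal)
  also have "\<dots> = (if m = (\<lambda>_. 0) then of_nat CARD('a) ^ k else 0)"
    using assms by (auto simp: vecs_def fun_eq_iff prod_zero_iff not_less[symmetric])
  finally show ?thesis .
qed

lemma sum_can_char_quadratic:
  fixes c b :: "'a::{finite,field}"
  assumes "odd CHAR('a)" "c \<noteq> 0"
  shows "(\<Sum>x\<in>UNIV. can_char (c * x ^ 2 - b * x)) = can_char (- (b ^ 2) / (4 * c)) * gauss_sum c"
proof -
  define d where "d = b / (2 * c)"
  have b: "b = 2 * c * d"
    using assms two_neq_zero_if_odd_CHAR[OF assms(1)] by (simp add: d_def)
  have "- (b ^ 2) / (4 * c) = - (c * d ^ 2)"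
    using assms four_neq_zero_if_odd_CHAR[OF assms(1)] by (simp add: b power2_eq_square field_simps)
  then have square: "c * (y + d) ^ 2 - b * (y + d) = - (b ^ 2) / (4 * c) + c * y ^ 2" for y
    by (simp add: b power2_eq_square algebra_simps)
  have "(\<Sum>x\<in>UNIV. can_char (c * x ^ 2 - b * x))
      = (\<Sum>y\<in>UNIV. can_char (c * (y + d) ^ 2 - b * (y + d)))"
    by (rule sum.reindex_bij_witness[of _ "\<lambda>y. y + d" "\<lambda>x. x - d"]) auto
  also have "\<dots> = can_char (- (b ^ 2) / (4 * c)) * gauss_sum c"
    by (simp only: square can_char_add gauss_sum_def sum_distrib_left)
  finally show ?thesis .
qed

lemma quadQ_eq_sum:
  assumes "0 < k"
  shows "quadQ k x = (\<Sum>i<k. (if i = 0 then - 1 else 1) * x i ^ 2)"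
proof -
  have "{..<k} = insert 0 {1..<k}"
    using assms by auto
  then show ?thesis
    by (simp add: quadQ_def)
qed

lemma sum_vecs_can_char_quadQ:
  fixes m :: "nat \<Rightarrow> 'a::{finite,field}" and t :: 'a
  assumes "odd CHAR('a)" and minus_one: "\<forall>c::'a. c ^ 2 \<noteq> - 1" and "0 < k" "t \<noteq> 0"
  shows "(\<Sum>x\<in>vecs k. can_char (t * quadQ k x - dotp k m x))
         = - (gauss_sum t ^ k) * can_char (- quadQ k m / (4 * t))"
proof -
  define e :: "nat \<Rightarrow> 'a" where "e i = (if i = 0 then - 1 else 1)" for i
  have K: "{..<k} = insert 0 {1..<k}"
    using \<open>0 < k\<close> by auto
  have "(\<Sum>x\<in>vecs k. can_char (t * quadQ k x - dotp k m x))
      = (\<Sum>x\<in>vecs k. can_char (\<Sum>i<k. (t * e i) * x i ^ 2 - m i * x i))"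
    by (simp add: quadQ_eq_sum[OF \<open>0 < k\<close>] e_def dotp_def sum_distrib_left sum_subtractf mult.assoc)
  also have "\<dots> = (\<Prod>i<k. \<Sum>a\<in>UNIV. can_char ((t * e i) * a ^ 2 - m i * a))"
    by (rule sum_vecs_can_char_separable)
  also have "\<dots> = (\<Prod>i<k. can_char (- (m i ^ 2) / (4 * (t * e i))) * gauss_sum (t * e i))"
    using \<open>t \<noteq> 0\<close> by (intro prod.cong refl sum_can_char_quadratic[OF assms(1)]) (simp add: e_def)
  also have "\<dots> = can_char (\<Sum>i<k. - (m i ^ 2) / (4 * (t * e i))) * (\<Prod>i<k. gauss_sum (t * e i))"
    by (simp add: prod.distrib can_char_sum)
  also have "(\<Sum>i<k. - (m i ^ 2) / (4 * (t * e i))) = - quadQ k m / (4 * t)"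
    by (simp add: K quadQ_def e_def sum_negf sum_divide_distrib diff_divide_distrib)
  also have "(\<Prod>i<k. gauss_sum (t * e i)) = - (gauss_sum t ^ k)"
    using \<open>0 < k\<close> by (simp add: K e_def gauss_sum_uminus[OF assms(1,2,4)] power_eq_if)
  finally show ?thesis
    by simp
qed

lemma card_times_cayley_eig:
  fixes m :: "nat \<Rightarrow> 'a::{finite,field}"
  assumes "odd CHAR('a)" and minus_one: "\<forall>c::'a. c ^ 2 \<noteq> - 1"
    and "0 < k" "even k" "m \<in> vecs k"
  shows "of_nat CARD('a) * cayley_eig k m =
     (if m = (\<lambda>_. 0) then of_nat CARD('a) ^ k else 0)
       - (- of_nat CARD('a)) ^ (k div 2) * ((if quadQ k m = 0 then of_nat CARD('a) else 0) - 1)"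
proof -
  let ?q = "of_nat CARD('a) :: complex"
  have power: "gauss_sum t ^ k = (- ?q) ^ (k div 2)" if "t \<noteq> 0" for t :: 'a
    using \<open>even k\<close> gauss_sum_square[OF assms(1,2) that] by (metis dvd_mult_div_cancel power_mult)
  define c where "c = - quadQ k m / 4"
  have c_eq_0: "c = 0 \<longleftrightarrow> quadQ k m = 0"
    using four_neq_zero_if_odd_CHAR[OF assms(1)] by (simp add: c_def)
  text \<open>The constraint \<open>Q(x) = 0\<close> is detected by \<open>\<Sum>t. \<chi>(t Q(x))\<close>, which is \<open>q\<close> or \<open>0\<close>.\<close>
  have "?q * cayley_eig k m
      = (\<Sum>x\<in>vecs k. (\<Sum>t\<in>UNIV. can_char (quadQ k x * t)) * can_char (- dotp k m x))"
    unfolding cayley_eig_def coneC_def sum_can_char_mult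
    by (simp add: sum.inter_filter[OF finite_vecs] sum_distrib_left) (rule sum.cong; simp)
  also have "\<dots> = (\<Sum>t\<in>UNIV. \<Sum>x\<in>vecs k. can_char (t * quadQ k x - dotp k m x))"
    by (subst sum.swap) (simp add: sum_distrib_left can_char_diff mult.commute)
  also have "\<dots> = (\<Sum>x\<in>vecs k. can_char (- dotp k m x))
      + (\<Sum>t\<in>UNIV - {0}. \<Sum>x\<in>vecs k. can_char (t * quadQ k x - dotp k m x))"
    by (simp add: sum.remove[of UNIV 0])
  also have "(\<Sum>t\<in>UNIV - {0}. \<Sum>x\<in>vecs k. can_char (t * quadQ k x - dotp k m x))
      = - ((- ?q) ^ (k div 2)) * (\<Sum>t\<in>UNIV - {0}. can_char (- quadQ k m / (4 * t)))"
    by (simp add: sum_distrib_left sum_vecs_can_char_quadQ[OF assms(1-3)] power)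
  also have "(\<Sum>t\<in>UNIV - {0}. can_char (- quadQ k m / (4 * t)))
      = (\<Sum>u\<in>UNIV - {0}. can_char (c * u))"
    unfolding c_def by (rule sum.reindex_bij_witness[of _ inverse inverse]) (auto simp: field_simps)
  also have "\<dots> = (if quadQ k m = 0 then ?q else 0) - 1"
    using c_eq_0 by (simp add: sum_diff1 sum_can_char_mult can_char_zero)
  finally show ?thesis
    using sum_vecs_can_char_dotp[OF \<open>m \<in> vecs k\<close>] by simp
qed

lemma sum_adjacent_can_char:
  fixes m x :: "nat \<Rightarrow> 'a::{finite,field}"
  assumes "x \<in> vecs k"
  shows "(\<Sum>y\<in>{y \<in> vecs k. cayley_adj k x y}. can_char (dotp k m y))
    = cayley_eig k m * can_char (dotp k m x)"
proof -
  have x_minus: "x - (x - y) = y" for y :: "nat \<Rightarrow> 'a"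
    by (simp add: fun_eq_iff)
  have "(\<Sum>y\<in>{y \<in> vecs k. cayley_adj k x y}. can_char (dotp k m y))
      = (\<Sum>c\<in>coneC k. can_char (dotp k m (x - c)))"
    by (rule sum.reindex_bij_witness[of _ "\<lambda>c. x - c" "\<lambda>y. x - y"])
      (use assms in \<open>auto simp: cayley_adj_def coneC_def vecs_def x_minus\<close>)
  also have "\<dots> = (\<Sum>c\<in>coneC k. can_char (- dotp k m c) * can_char (dotp k m x))"
    by (simp add: dotp_def right_diff_distrib sum_subtractf can_char_add[symmetric])
  finally show ?thesis
    by (simp add: cayley_eig_def sum_distrib_right)
qed

theorem theorem1p6:
  fixes k :: nat and m :: "nat \<Rightarrow> 'a::{finite,field}"
  assumes "odd CHAR('a)"
    and "CARD('a) mod 4 = 3"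
    and "k > 0" and "k mod 4 = 0"
    and "m \<in> vecs k"
  defines "q \<equiv> complex_of_nat CARD('a)"
  defines "lam \<equiv> q ^ k * (if m \<in> coneC k
                 then (if m = (\<lambda>_. 0) then 1 else 0) / q - 1 / q ^ (k div 2) + 1 / q ^ ((k + 2) div 2)
                 else 1 / q ^ ((k + 2) div 2))"
  shows "cayley_eig k m = lam
     \<and> (\<forall>x \<in> vecs k. (\<Sum>y \<in> {y \<in> vecs k. cayley_adj k x y}. can_char (dotp k m y))
                     = lam * can_char (dotp k m x))"
proof -
  define h where "h = k div 2"
  have h: "k = 2 * h" "even h"
    using \<open>k mod 4 = 0\<close> unfolding h_def by presburger+
  have "\<forall>c::'a. c ^ 2 \<noteq> - 1"
    using minus_one_not_square assms(1,2) by blast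
  from card_times_cayley_eig[OF assms(1) this assms(3) _ assms(5)]
  have "q * cayley_eig k m = (if m = (\<lambda>_. 0) then q ^ k else 0)
      - q ^ h * ((if quadQ k m = 0 then q else 0) - 1)"
    using h unfolding q_def by simp
  moreover have "q \<noteq> 0"
    by (simp add: q_def)
  ultimately have eig: "cayley_eig k m = ((if m = (\<lambda>_. 0) then q ^ k else 0)
      - q ^ h * ((if quadQ k m = 0 then q else 0) - 1)) / q"
    by (simp add: eq_divide_eq mult.commute)
  have "quadQ k (\<lambda>_. 0 :: 'a) = 0"
    by (simp add: quadQ_def)
  moreover have "m \<in> coneC k \<longleftrightarrow> quadQ k m = 0"
    using assms(5) by (simp add: coneC_def)
  ultimately have "cayley_eig k m = lam"
    using \<open>q \<noteq> 0\<close> unfolding eig unfolding lam_def h(1)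
    by (auto simp: field_simps power_add mult_2 mult_2_right)
  then show ?thesis
    by (simp add: sum_adjacent_can_char)
qed

end
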